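(* Let $T$ be a trigraph in $\mathcal F$ that admits no balanced skew-partition and contains no antihole of length six. If $T$ is unfavorable, then either $T$ is complete or $|V(T)|\le 5$.
   Context: A trigraph $T$ consists of a finite set $V(T)$ and a map $\theta:\binom{V(T)}{2}\to\{-1,0,1\}$. Two distinct vertices $u,v$ are strongly adjacent if $\theta(uv)=1$, strongly antiadjacent if $\theta(uv)=-1$, and semiadjacent (a switchable pair) if $\theta(uv)=0$; they are adjacent if $\theta(uv)\in\{0,1\}$ and antiadjacent if $\theta(uv)\in\{0,-1\}$. $N(v)$ is the set of vertices adjacent to $v$. An edge (antiedge) is an adjacent (antiadjacent) pair; a strong edge (strong antiedge) is a strongly adjacent (strongly antiadjacent) pair. A vertex/set is strongly complete (strongly anticomplete, complete, anticomplete) to a disjoint set if every pair between them is strongly adjacent (strongly antiadjacent, adjacent, antiadjacent). The complement $\overline T$ has vertex set $V(T)$ and adjacency function $-\theta$. For $X\subseteq V(T)$, $T|X$ is the trigraph on $X$ with $\theta$ restricted, and $T\setminus X=T|(V(T)\setminus X)$; $T$ contains $H$ if $H$ is isomorphic to some $T|X$. A clique (strong clique) is a set of pairwise adjacent (strongly adjacent) vertices; a stable set (strongly stable set) is a set of pairwise antiadjacent (strongly antiadjacent) vertices; $T$ is complete if $V(T)$ is a clique. $T$ is a graph if it has no switchable pair. A realization of $T$ is a graph on $V(T)$ in which every strong edge is an edge and every strong antiedge is a non-edge; the full realization is the realization in which all switchable pairs are edges. A set $X$ is connected if the full realization of $T|X$ is connected, and anticonnected if the graph on $X$ whose edges are the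 antiadjacent pairs of $T|X$ is connected; components (anticomponents) are maximal connected (anticonnected) subsets. A path is a sequence of distinct vertices $p_1,\dots,p_k$ such that $p_i,p_j$ are adjacent when $|i-j|=1$ and antiadjacent when $|i-j|>1$; its length is $k-1$, and it is even or odd according to its length. An antipath is an induced subtrigraph whose complement is a path of $\overline T$. A hole of length $k\ge5$ consists of vertices $h_1,\dots,h_k$ with $h_i,h_j$ adjacent if $|i-j|\in\{1,k-1\}$ and antiadjacent otherwise; an antihole is an induced subtrigraph whose complement is a hole of $\overline T$ (length = number of vertices). $T$ is Berge if it contains no hole of odd length and no antihole of odd length. An even pair of $T$ is a strongly antiadjacent pair $\{u,v\}$ such that every path from $u$ to $v$ in $T$ has even length. $\Sigma(T)$ is the graph on $V(T)$ whose edges are the switchable pairs of $T$; a switchable component is a connected component of $\Sigma(T)$ with at least two vertices. $\mathcal F$ is the class of Berge trigraphs $T$ such that: (1) $T$ has at most one switchable component, and it has at most two edges; (2) if the switchable component has exactly one edge $xy$, then $N(x)\cap N(y)=\emptyset$ (it is called small); (3) if it has two edges, with $v$ the vertex of degree two in $\Sigma(T)$ and $x,y$ its neighbours, then $v$ is strongly anticomplete to $V(T)\setminus\{v,x,y\}$, $x$ is strongly antiadjacent to $y$, and $N(x)\cap N(y)=\{v\}$ (it is called light). For $T\in\mathcal F$, $D$ denotes the vertex set of its switchable component ($D=\emptyset$ if $T$ has no switchable pair). A pair $\{u,v\}$ is disjoint from the switchable component if $\{u,v\}\cap D=\emptyset$. A trigraph $T\in\mathcal F$ is favorable if (1) $|V(T)|\ge5$;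 (2) $T$ has a strongly antiadjacent pair $\{u,v\}$ disjoint from $D$; and (3) if $D=\{x,y\}$ is small, then at least one of $V(T)\setminus(D\cup N(x))$, $V(T)\setminus(D\cup N(y))$ is not a clique. It is unfavorable otherwise. A skew-partition of $T$ is a partition $(A,B)$ of $V(T)$ with $A$ not connected and $B$ not anticonnected; it is balanced if there is no odd path of length greater than one with both ends in $B$ and interior in $A$, and no odd antipath of length greater than one with both ends in $A$ and interior in $B$. *)

theory Defs
  imports Main
begin

definition trigraph :: "'a set \<Rightarrow> ('a \<Rightarrow> 'a \<Rightarrow> int) \<Rightarrow> bool" where
  "trigraph V \<theta> \<longleftrightarrow> finite V \<and>
     (\<forall>u\<in>V. \<forall>v\<in>V. u \<noteq> v \<longrightarrow> \<theta> u v = \<theta> v u \<and> \<theta> u v \<in> {-1, 0, 1})"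

definition adj :: "('a \<Rightarrow> 'a \<Rightarrow> int) \<Rightarrow> 'a \<Rightarrow> 'a \<Rightarrow> bool" where
  "adj \<theta> u v \<longleftrightarrow> \<theta> u v \<in> {0, 1}"

definition antiadj :: "('a \<Rightarrow> 'a \<Rightarrow> int) \<Rightarrow> 'a \<Rightarrow> 'a \<Rightarrow> bool" where
  "antiadj \<theta> u v \<longleftrightarrow> \<theta> u v \<in> {0, -1}"

definition nbhd :: "'a set \<Rightarrow> ('a \<Rightarrow> 'a \<Rightarrow> int) \<Rightarrow> 'a \<Rightarrow> 'a set" where
  "nbhd V \<theta> v = {u \<in> V. u \<noteq> v \<and> adj \<theta> u v}"

definition is_clique :: "('a \<Rightarrow> 'a \<Rightarrow> int) \<Rightarrow> 'a set \<Rightarrow> bool" where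
  "is_clique \<theta> X \<longleftrightarrow> (\<forall>u\<in>X. \<forall>v\<in>X. u \<noteq> v \<longrightarrow> adj \<theta> u v)"

definition complete_trigraph :: "'a set \<Rightarrow> ('a \<Rightarrow> 'a \<Rightarrow> int) \<Rightarrow> bool" where
  "complete_trigraph V \<theta> \<longleftrightarrow> is_clique \<theta> V"

text \<open>Paths and antipaths, given as lists of vertices p_1,...,p_k (length = k-1).\<close>

definition is_path :: "'a set \<Rightarrow> ('a \<Rightarrow> 'a \<Rightarrow> int) \<Rightarrow> 'a list \<Rightarrow> bool" where
  "is_path V \<theta> ps \<longleftrightarrow> ps \<noteq> [] \<and> distinct ps \<and> set ps \<subseteq> V \<and>
     (\<forall>i<length ps. \<forall>j<length ps.
        (i + 1 = j \<longrightarrow> adj \<theta> (ps ! i) (ps ! j)) \<and>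
        (i + 1 < j \<longrightarrow> antiadj \<theta> (ps ! i) (ps ! j)))"

definition is_antipath :: "'a set \<Rightarrow> ('a \<Rightarrow> 'a \<Rightarrow> int) \<Rightarrow> 'a list \<Rightarrow> bool" where
  "is_antipath V \<theta> ps \<longleftrightarrow> ps \<noteq> [] \<and> distinct ps \<and> set ps \<subseteq> V \<and>
     (\<forall>i<length ps. \<forall>j<length ps.
        (i + 1 = j \<longrightarrow> antiadj \<theta> (ps ! i) (ps ! j)) \<and>
        (i + 1 < j \<longrightarrow> adj \<theta> (ps ! i) (ps ! j)))"

definition cyc_consec :: "nat \<Rightarrow> nat \<Rightarrow> nat \<Rightarrow> bool" where
  "cyc_consec k i j \<longleftrightarrow> (i + 1) mod k = j \<or> (j + 1) mod k = i"

definition is_hole :: "'a set \<Rightarrow> ('a \<Rightarrow> 'a \<Rightarrow> int) \<Rightarrow> 'a list \<Rightarrow> bool" where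
  "is_hole V \<theta> hs \<longleftrightarrow> length hs \<ge> 5 \<and> distinct hs \<and> set hs \<subseteq> V \<and>
     (\<forall>i<length hs. \<forall>j<length hs. i \<noteq> j \<longrightarrow>
        (cyc_consec (length hs) i j \<longrightarrow> adj \<theta> (hs ! i) (hs ! j)) \<and>
        (\<not> cyc_consec (length hs) i j \<longrightarrow> antiadj \<theta> (hs ! i) (hs ! j)))"

definition is_antihole :: "'a set \<Rightarrow> ('a \<Rightarrow> 'a \<Rightarrow> int) \<Rightarrow> 'a list \<Rightarrow> bool" where
  "is_antihole V \<theta> hs \<longleftrightarrow> length hs \<ge> 5 \<and> distinct hs \<and> set hs \<subseteq> V \<and>
     (\<forall>i<length hs. \<forall>j<length hs. i \<noteq> j \<longrightarrow>
        (cyc_consec (length hs) i j \<longrightarrow> antiadj \<theta> (hs ! i) (hs ! j)) \<and>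
        (\<not> cyc_consec (length hs) i j \<longrightarrow> adj \<theta> (hs ! i) (hs ! j)))"

definition berge :: "'a set \<Rightarrow> ('a \<Rightarrow> 'a \<Rightarrow> int) \<Rightarrow> bool" where
  "berge V \<theta> \<longleftrightarrow> \<not> (\<exists>hs. is_hole V \<theta> hs \<and> odd (length hs)) \<and>
                  \<not> (\<exists>hs. is_antihole V \<theta> hs \<and> odd (length hs))"

text \<open>Connectivity (of the full realization of T|X) and anticonnectivity.
  The empty set counts as connected, so "not connected" means at least two components.\<close>

definition connected_set :: "('a \<Rightarrow> 'a \<Rightarrow> int) \<Rightarrow> 'a set \<Rightarrow> bool" where
  "connected_set \<theta> X \<longleftrightarrow> (\<forall>u\<in>X. \<forall>v\<in>X.
     (\<lambda>a b. a \<in> X \<and> b \<in> X \<and> a \<noteq> b \<and> adj \<theta> a b)\<^sup>*\<^sup>* u v)"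

definition anticonnected_set :: "('a \<Rightarrow> 'a \<Rightarrow> int) \<Rightarrow> 'a set \<Rightarrow> bool" where
  "anticonnected_set \<theta> X \<longleftrightarrow> (\<forall>u\<in>X. \<forall>v\<in>X.
     (\<lambda>a b. a \<in> X \<and> b \<in> X \<and> a \<noteq> b \<and> antiadj \<theta> a b)\<^sup>*\<^sup>* u v)"

definition skew_partition :: "'a set \<Rightarrow> ('a \<Rightarrow> 'a \<Rightarrow> int) \<Rightarrow> 'a set \<Rightarrow> 'a set \<Rightarrow> bool" where
  "skew_partition V \<theta> A B \<longleftrightarrow> A \<union> B = V \<and> A \<inter> B = {} \<and>
     \<not> connected_set \<theta> A \<and> \<not> anticonnected_set \<theta> B"

definition balanced_skew_partition :: "'a set \<Rightarrow> ('a \<Rightarrow> 'a \<Rightarrow> int) \<Rightarrow> 'a set \<Rightarrow> 'a set \<Rightarrow> bool" where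
  "balanced_skew_partition V \<theta> A B \<longleftrightarrow> skew_partition V \<theta> A B \<and>
     \<not> (\<exists>ps. is_path V \<theta> ps \<and> odd (length ps - 1) \<and> length ps - 1 > 1 \<and>
            hd ps \<in> B \<and> last ps \<in> B \<and> set (butlast (tl ps)) \<subseteq> A) \<and>
     \<not> (\<exists>ps. is_antipath V \<theta> ps \<and> odd (length ps - 1) \<and> length ps - 1 > 1 \<and>
            hd ps \<in> A \<and> last ps \<in> A \<and> set (butlast (tl ps)) \<subseteq> B)"

definition sw_edge :: "'a set \<Rightarrow> ('a \<Rightarrow> 'a \<Rightarrow> int) \<Rightarrow> 'a \<Rightarrow> 'a \<Rightarrow> bool" where
  "sw_edge V \<theta> u v \<longleftrightarrow> u \<in> V \<and> v \<in> V \<and> u \<noteq> v \<and> \<theta> u v = 0"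

definition sigma_comp :: "'a set \<Rightarrow> ('a \<Rightarrow> 'a \<Rightarrow> int) \<Rightarrow> 'a \<Rightarrow> 'a set" where
  "sigma_comp V \<theta> x = {y \<in> V. (sw_edge V \<theta>)\<^sup>*\<^sup>* x y}"

definition switchable_component :: "'a set \<Rightarrow> ('a \<Rightarrow> 'a \<Rightarrow> int) \<Rightarrow> 'a set \<Rightarrow> bool" where
  "switchable_component V \<theta> C \<longleftrightarrow> (\<exists>x\<in>V. C = sigma_comp V \<theta> x) \<and> card C \<ge> 2"

definition sw_edges_in :: "'a set \<Rightarrow> ('a \<Rightarrow> 'a \<Rightarrow> int) \<Rightarrow> 'a set \<Rightarrow> 'a set set" where
  "sw_edges_in V \<theta> C = {{u, v} | u v. u \<in> C \<and> v \<in> C \<and> sw_edge V \<theta> u v}"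

text \<open>D: vertex set of the switchable component (empty if there is none).\<close>

definition Dset :: "'a set \<Rightarrow> ('a \<Rightarrow> 'a \<Rightarrow> int) \<Rightarrow> 'a set" where
  "Dset V \<theta> = \<Union> {C. switchable_component V \<theta> C}"

definition class_F :: "'a set \<Rightarrow> ('a \<Rightarrow> 'a \<Rightarrow> int) \<Rightarrow> bool" where
  "class_F V \<theta> \<longleftrightarrow> trigraph V \<theta> \<and> berge V \<theta> \<and>
     (\<forall>C C'. switchable_component V \<theta> C \<and> switchable_component V \<theta> C' \<longrightarrow> C = C') \<and>
     (\<forall>C. switchable_component V \<theta> C \<longrightarrow>
        card (sw_edges_in V \<theta> C) \<le> 2 \<and>
        (\<forall>x y. sw_edges_in V \<theta> C = {{x, y}} \<longrightarrow>
            nbhd V \<theta> x \<inter> nbhd V \<theta> y = {}) \<and>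
        (\<forall>v x y. x \<noteq> y \<and> sw_edges_in V \<theta> C = {{v, x}, {v, y}} \<longrightarrow>
            (\<forall>w\<in>V - {v, x, y}. \<theta> v w = -1) \<and> \<theta> x y = -1 \<and>
            nbhd V \<theta> x \<inter> nbhd V \<theta> y = {v}))"

definition favorable :: "'a set \<Rightarrow> ('a \<Rightarrow> 'a \<Rightarrow> int) \<Rightarrow> bool" where
  "favorable V \<theta> \<longleftrightarrow> card V \<ge> 5 \<and>
     (\<exists>u\<in>V - Dset V \<theta>. \<exists>v\<in>V - Dset V \<theta>. u \<noteq> v \<and> \<theta> u v = -1) \<and>
     (\<forall>x y. x \<noteq> y \<and> Dset V \<theta> = {x, y} \<longrightarrow>
        \<not> is_clique \<theta> (V - (Dset V \<theta> \<union> nbhd V \<theta> x)) \<or>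
        \<not> is_clique \<theta> (V - (Dset V \<theta> \<union> nbhd V \<theta> y)))"

end

theory Submission
  imports Defs
begin

text \<open>Without switchable pairs,
  unfavorability leaves no strong antiedge at all, so T would be complete. Otherwise the
  switchable component D is a small edge xy or a light path x-v-y, and unfavorability makes the
  rest R = V - D almost a strong clique: R - N(x) and R - N(y) in the small case, all of R in the
  light case. Splitting R along the neighbourhoods of x and y, every configuration yields an
  obstruction: a balanced skew partition (a strong clique whose complement is disconnected, or a
  strong antiedge whose complement is not anticonnected), an odd hole of length five through D,
  or, when both neighbourhoods in the small case have two vertices, two crossing pairs
  a1 b1, a2 b2 that close up into the antihole x b1 a1 y a2 b2 of length six.\<close>

lemma trigraph_sym: "trigraph V \<theta> \<Longrightarrow> u \<in> V \<Longrightarrow> v \<in> V \<Longrightarrow> \<theta> u v = \<theta> v u"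
  by (cases "u = v") (simp_all add: trigraph_def)

lemma trigraph_values:
  "trigraph V \<theta> \<Longrightarrow> u \<in> V \<Longrightarrow> v \<in> V \<Longrightarrow> u \<noteq> v \<Longrightarrow> \<theta> u v = -1 \<or> \<theta> u v = 0 \<or> \<theta> u v = 1"
  unfolding trigraph_def by auto

lemma trigraph_finite: "trigraph V \<theta> \<Longrightarrow> finite V"
  unfolding trigraph_def by (rule conjunct1)

lemma adj_sym: "trigraph V \<theta> \<Longrightarrow> u \<in> V \<Longrightarrow> v \<in> V \<Longrightarrow> adj \<theta> u v \<Longrightarrow> adj \<theta> v u"
  by (simp add: adj_def trigraph_sym)

lemma antiadj_sym: "trigraph V \<theta> \<Longrightarrow> u \<in> V \<Longrightarrow> v \<in> V \<Longrightarrow> antiadj \<theta> u v \<Longrightarrow> antiadj \<theta> v u"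
  by (simp add: antiadj_def trigraph_sym)

lemma is_cliqueI_no_strong_antiedge:
  assumes "trigraph V \<theta>" "S \<subseteq> V"
    and "\<And>u w. u \<in> S \<Longrightarrow> w \<in> S \<Longrightarrow> u \<noteq> w \<Longrightarrow> \<theta> u w \<noteq> -1"
  shows "is_clique \<theta> S"
  using assms trigraph_values[OF assms(1)] unfolding is_clique_def adj_def by blast

lemma obtain_two_elements:
  assumes "finite A" "2 \<le> card A"
  obtains a b where "a \<in> A" "b \<in> A" "a \<noteq> b"
  using assms card_le_Suc0_iff_eq[OF assms(1)] by fastforce

lemma rtranclp_closed_set:
  assumes "R\<^sup>*\<^sup>* a b" "a \<in> S" "\<And>u w. u \<in> S \<Longrightarrow> R u w \<Longrightarrow> w \<in> S"
  shows "b \<in> S"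
  using assms by (induction rule: rtranclp_induct) auto

lemma not_connected_setI:
  assumes "u \<in> A" "w \<in> A" "u \<in> S" "w \<notin> S"
    and "\<And>a b. a \<in> A \<Longrightarrow> b \<in> A \<Longrightarrow> a \<in> S \<Longrightarrow> b \<notin> S \<Longrightarrow> \<not> adj \<theta> a b"
  shows "\<not> connected_set \<theta> A"
proof
  assume "connected_set \<theta> A"
  then have "(\<lambda>a b. a \<in> A \<and> b \<in> A \<and> a \<noteq> b \<and> adj \<theta> a b)\<^sup>*\<^sup>* u w"
    using assms unfolding connected_set_def by blast
  then have "w \<in> S" by (rule rtranclp_closed_set) (use assms in auto)
  with assms show False by simp
qed

lemma not_anticonnected_setI:
  assumes "u \<in> A" "w \<in> A" "u \<in> S" "w \<notin> S"
    and "\<And>a b. a \<in> A \<Longrightarrow> b \<in> A \<Longrightarrow> a \<in> S \<Longrightarrow> b \<notin> S \<Longrightarrow> \<not> antiadj \<theta> a b"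
  shows "\<not> anticonnected_set \<theta> A"
proof
  assume "anticonnected_set \<theta> A"
  then have "(\<lambda>a b. a \<in> A \<and> b \<in> A \<and> a \<noteq> b \<and> antiadj \<theta> a b)\<^sup>*\<^sup>* u w"
    using assms unfolding anticonnected_set_def by blast
  then have "w \<in> S" by (rule rtranclp_closed_set) (use assms in auto)
  with assms show False by simp
qed

lemma odd_length_gt_1_ge_4: "odd (length ps - 1) \<Longrightarrow> 1 < length ps - 1 \<Longrightarrow> 4 \<le> length ps"
  by presburger

lemma second_third_in_interior:
  assumes "4 \<le> length ps"
  shows "ps ! 1 \<in> set (butlast (tl ps))" "ps ! 2 \<in> set (butlast (tl ps))"
proof -
  obtain a b c d r where "ps = a # b # c # d # r"
    using assms by (cases ps; cases "tl ps"; cases "tl (tl ps)"; cases "tl (tl (tl ps))"; auto)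
  then show "ps ! 1 \<in> set (butlast (tl ps))" "ps ! 2 \<in> set (butlast (tl ps))" by simp_all
qed

lemma ends_of_long_path_antiadj:
  assumes "is_path V \<theta> ps" "4 \<le> length ps"
  shows "hd ps \<noteq> last ps" "antiadj \<theta> (hd ps) (last ps)"
  using assms by (auto simp: is_path_def hd_conv_nth last_conv_nth nth_eq_iff_index_eq)

lemma ends_of_long_antipath_adj:
  assumes "is_antipath V \<theta> ps" "4 \<le> length ps"
  shows "hd ps \<noteq> last ps" "adj \<theta> (hd ps) (last ps)"
  using assms by (auto simp: is_antipath_def hd_conv_nth last_conv_nth nth_eq_iff_index_eq)

lemma interior_of_long_path_adj:
  assumes "is_path V \<theta> ps" "4 \<le> length ps"
  shows "ps ! 1 \<noteq> ps ! 2" "adj \<theta> (ps ! 1) (ps ! 2)"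
  using assms by (auto simp: is_path_def nth_eq_iff_index_eq)

lemma interior_of_long_antipath_antiadj:
  assumes "is_antipath V \<theta> ps" "4 \<le> length ps"
  shows "ps ! 1 \<noteq> ps ! 2" "antiadj \<theta> (ps ! 1) (ps ! 2)"
  using assms by (auto simp: is_antipath_def nth_eq_iff_index_eq)

text \<open>The ends of a long path are antiadjacent, and so are two consecutive interior vertices of a
  long antipath; a strong clique contains neither, a strong antiedge neither dual pair.\<close>

lemma strong_clique_balanced_skew_partition:
  assumes "B \<subseteq> V" and strong_clique: "\<And>u w. u \<in> B \<Longrightarrow> w \<in> B \<Longrightarrow> u \<noteq> w \<Longrightarrow> \<theta> u w = 1"
    and "b1 \<in> B" "b2 \<in> B" "b1 \<noteq> b2" and "\<not> connected_set \<theta> (V - B)"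
  shows "balanced_skew_partition V \<theta> (V - B) B"
proof -
  have "\<not> anticonnected_set \<theta> B"
    by (rule not_anticonnected_setI[of b1 B b2 "{b1}"]) (use assms in \<open>auto simp: antiadj_def\<close>)
  moreover have False
    if "is_path V \<theta> ps" "odd (length ps - 1)" "1 < length ps - 1" "hd ps \<in> B" "last ps \<in> B" for ps
    using that ends_of_long_path_antiadj[OF that(1) odd_length_gt_1_ge_4[OF that(2,3)]]
      strong_clique[of "hd ps" "last ps"] by (auto simp: antiadj_def)
  moreover have False
    if "is_antipath V \<theta> ps" "odd (length ps - 1)" "1 < length ps - 1"
      "set (butlast (tl ps)) \<subseteq> B" for ps
  proof -
    have "4 \<le> length ps" using odd_length_gt_1_ge_4 that by blast
    then show False
      using that interior_of_long_antipath_antiadj[OF that(1)] second_third_in_interior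
        strong_clique[of "ps ! 1" "ps ! 2"] by (fastforce simp: antiadj_def)
  qed
  ultimately show ?thesis
    using assms unfolding balanced_skew_partition_def skew_partition_def by blast
qed

lemma strong_antiedge_balanced_skew_partition:
  assumes "trigraph V \<theta>" "a \<in> V" "b \<in> V" "a \<noteq> b" "\<theta> a b = -1"
    and "\<not> anticonnected_set \<theta> (V - {a, b})"
  shows "balanced_skew_partition V \<theta> {a, b} (V - {a, b})"
proof -
  have strong_anti: "\<theta> u w = -1" if "u \<in> {a, b}" "w \<in> {a, b}" "u \<noteq> w" for u w
    using that assms trigraph_sym[OF assms(1), of a b] by auto
  have "\<not> connected_set \<theta> {a, b}"
    by (rule not_connected_setI[of a "{a, b}" b "{a}"]) (use assms strong_anti in \<open>auto simp: adj_def\<close>)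
  moreover have False
    if "is_path V \<theta> ps" "odd (length ps - 1)" "1 < length ps - 1"
      "set (butlast (tl ps)) \<subseteq> {a, b}" for ps
  proof -
    have "4 \<le> length ps" using odd_length_gt_1_ge_4 that by blast
    then show False
      using that interior_of_long_path_adj[OF that(1)] second_third_in_interior
        strong_anti[of "ps ! 1" "ps ! 2"] by (fastforce simp: adj_def)
  qed
  moreover have False
    if "is_antipath V \<theta> ps" "odd (length ps - 1)" "1 < length ps - 1"
      "hd ps \<in> {a, b}" "last ps \<in> {a, b}" for ps
    using that ends_of_long_antipath_adj[OF that(1) odd_length_gt_1_ge_4[OF that(2,3)]]
      strong_anti[of "hd ps" "last ps"] by (auto simp: adj_def)
  moreover have "{a, b} \<union> (V - {a, b}) = V" using assms by auto
  ultimately show ?thesis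
    using assms unfolding balanced_skew_partition_def skew_partition_def by blast
qed

lemma hole_5I:
  assumes T: "trigraph V \<theta>" and d: "distinct [h0, h1, h2, h3, h4]"
    and s: "set [h0, h1, h2, h3, h4] \<subseteq> V"
    and a: "adj \<theta> h0 h1" "adj \<theta> h1 h2" "adj \<theta> h2 h3" "adj \<theta> h3 h4" "adj \<theta> h4 h0"
    and n: "antiadj \<theta> h0 h2" "antiadj \<theta> h0 h3" "antiadj \<theta> h1 h3" "antiadj \<theta> h1 h4"
      "antiadj \<theta> h2 h4"
  shows "is_hole V \<theta> [h0, h1, h2, h3, h4]"
proof -
  have V: "h0 \<in> V" "h1 \<in> V" "h2 \<in> V" "h3 \<in> V" "h4 \<in> V" using s by auto
  note a' = a adj_sym[OF T V(1,2) a(1)] adj_sym[OF T V(2,3) a(2)] adj_sym[OF T V(3,4) a(3)]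
    adj_sym[OF T V(4,5) a(4)] adj_sym[OF T V(5,1) a(5)]
  note n' = n antiadj_sym[OF T V(1,3) n(1)] antiadj_sym[OF T V(1,4) n(2)]
    antiadj_sym[OF T V(2,4) n(3)] antiadj_sym[OF T V(2,5) n(4)] antiadj_sym[OF T V(3,5) n(5)]
  have "(cyc_consec 5 i j \<longrightarrow> adj \<theta> ([h0, h1, h2, h3, h4] ! i) ([h0, h1, h2, h3, h4] ! j)) \<and>
      (\<not> cyc_consec 5 i j \<longrightarrow> antiadj \<theta> ([h0, h1, h2, h3, h4] ! i) ([h0, h1, h2, h3, h4] ! j))"
    if "i < 5" "j < 5" "i \<noteq> j" for i j :: nat
  proof -
    have "i = 0 \<or> i = 1 \<or> i = 2 \<or> i = 3 \<or> i = 4" "j = 0 \<or> j = 1 \<or> j = 2 \<or> j = 3 \<or> j = 4"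
      using that by auto
    then show ?thesis using \<open>i \<noteq> j\<close> by (elim disjE; simp add: cyc_consec_def a' n')
  qed
  moreover have "length [h0, h1, h2, h3, h4] = 5" by simp
  ultimately show ?thesis unfolding is_hole_def using d s by presburger
qed

lemma odd_hole_not_berge: "is_hole V \<theta> hs \<Longrightarrow> odd (length hs) \<Longrightarrow> \<not> berge V \<theta>"
  unfolding berge_def by blast

lemma antihole_6I:
  assumes T: "trigraph V \<theta>" and d: "distinct [h0, h1, h2, h3, h4, h5]"
    and s: "set [h0, h1, h2, h3, h4, h5] \<subseteq> V"
    and a: "antiadj \<theta> h0 h1" "antiadj \<theta> h1 h2" "antiadj \<theta> h2 h3" "antiadj \<theta> h3 h4"
      "antiadj \<theta> h4 h5" "antiadj \<theta> h5 h0"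
    and n: "adj \<theta> h0 h2" "adj \<theta> h0 h3" "adj \<theta> h0 h4" "adj \<theta> h1 h3" "adj \<theta> h1 h4"
      "adj \<theta> h1 h5" "adj \<theta> h2 h4" "adj \<theta> h2 h5" "adj \<theta> h3 h5"
  shows "is_antihole V \<theta> [h0, h1, h2, h3, h4, h5]"
proof -
  have V: "h0 \<in> V" "h1 \<in> V" "h2 \<in> V" "h3 \<in> V" "h4 \<in> V" "h5 \<in> V" using s by auto
  note a' = a antiadj_sym[OF T V(1,2) a(1)] antiadj_sym[OF T V(2,3) a(2)]
    antiadj_sym[OF T V(3,4) a(3)] antiadj_sym[OF T V(4,5) a(4)] antiadj_sym[OF T V(5,6) a(5)]
    antiadj_sym[OF T V(6,1) a(6)]
  note n' = n adj_sym[OF T V(1,3) n(1)] adj_sym[OF T V(1,4) n(2)] adj_sym[OF T V(1,5) n(3)]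
    adj_sym[OF T V(2,4) n(4)] adj_sym[OF T V(2,5) n(5)] adj_sym[OF T V(2,6) n(6)]
    adj_sym[OF T V(3,5) n(7)] adj_sym[OF T V(3,6) n(8)] adj_sym[OF T V(4,6) n(9)]
  have "(cyc_consec 6 i j \<longrightarrow> antiadj \<theta> ([h0, h1, h2, h3, h4, h5] ! i) ([h0, h1, h2, h3, h4, h5] ! j)) \<and>
      (\<not> cyc_consec 6 i j \<longrightarrow> adj \<theta> ([h0, h1, h2, h3, h4, h5] ! i) ([h0, h1, h2, h3, h4, h5] ! j))"
    if "i < 6" "j < 6" "i \<noteq> j" for i j :: nat
  proof -
    have "i = 0 \<or> i = 1 \<or> i = 2 \<or> i = 3 \<or> i = 4 \<or> i = 5"
      "j = 0 \<or> j = 1 \<or> j = 2 \<or> j = 3 \<or> j = 4 \<or> j = 5"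
      using that by auto
    then show ?thesis using \<open>i \<noteq> j\<close> by (elim disjE; simp add: cyc_consec_def a' n')
  qed
  moreover have "length [h0, h1, h2, h3, h4, h5] = 6" by simp
  ultimately show ?thesis unfolding is_antihole_def using d s by presburger
qed

text \<open>Choose a1 with an inclusion-maximal H-neighbourhood in Y, a non-neighbour b2 of a1 and a
  neighbour a2 of b2; maximality gives a neighbour b1 of a1 that is not a neighbour of a2.\<close>

lemma crossing_pairs:
  assumes "finite X" "X \<noteq> {}"
    and covered: "\<forall>b\<in>Y. \<exists>a\<in>X. H a b" and not_full: "\<forall>a\<in>X. \<exists>b\<in>Y. \<not> H a b"
  obtains a1 a2 b1 b2 where "a1 \<in> X" "a2 \<in> X" "b1 \<in> Y" "b2 \<in> Y"
    "H a1 b1" "H a2 b2" "\<not> H a1 b2" "\<not> H a2 b1"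
proof -
  define NH where "NH a = {b \<in> Y. H a b}" for a
  obtain a1 where a1: "a1 \<in> X" and maximal: "\<forall>a\<in>X. NH a1 \<subseteq> NH a \<longrightarrow> NH a1 = NH a"
    using finite_has_maximal[of "NH ` X"] assms(1,2) by auto
  obtain b2 where b2: "b2 \<in> Y" "\<not> H a1 b2" using not_full a1 by blast
  obtain a2 where a2: "a2 \<in> X" "H a2 b2" using covered b2 by blast
  have "\<not> NH a1 \<subseteq> NH a2"
    using maximal a2 b2 unfolding NH_def by blast
  then obtain b1 where "b1 \<in> Y" "H a1 b1" "\<not> H a2 b1" unfolding NH_def by auto
  with a1 a2 b2 that show ?thesis by blast
qed

lemma sigma_comp_closed:
  "a \<in> sigma_comp V \<theta> x0 \<Longrightarrow> sw_edge V \<theta> a b \<Longrightarrow> b \<in> sigma_comp V \<theta> x0"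
  unfolding sigma_comp_def by (auto intro: rtranclp.rtrancl_into_rtrancl simp: sw_edge_def)

lemma sw_edges_inE:
  assumes "e \<in> sw_edges_in V \<theta> C"
  obtains u w where "e = {u, w}" "u \<in> C" "w \<in> C" "sw_edge V \<theta> u w"
  using assms unfolding sw_edges_in_def by blast

lemma sigma_comp_sw_edges_inI:
  assumes "C = sigma_comp V \<theta> x0" "a \<in> C" "sw_edge V \<theta> a b"
  shows "{a, b} \<in> sw_edges_in V \<theta> C"
proof -
  have "b \<in> C" using sigma_comp_closed assms by simp
  then show ?thesis using assms(2,3) unfolding sw_edges_in_def by blast
qed

lemma sw_edges_in_theta:
  assumes "trigraph V \<theta>" "{a, b} \<in> sw_edges_in V \<theta> C" "a \<noteq> b"
  shows "\<theta> a b = 0"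
  using assms(2)
proof (rule sw_edges_inE)
  fix u w assume "{a, b} = {u, w}" "sw_edge V \<theta> u w"
  then show "\<theta> a b = 0"
    using trigraph_sym[OF assms(1), of u w] by (auto simp: doubleton_eq_iff sw_edge_def)
qed

lemma switchable_component_sw_edges_cover:
  assumes "switchable_component V \<theta> C"
  shows "\<Union> (sw_edges_in V \<theta> C) = C"
proof -
  obtain x0 where x0: "x0 \<in> V" "C = sigma_comp V \<theta> x0" and card: "2 \<le> card C"
    using assms unfolding switchable_component_def by blast
  have "finite C" using card by (intro card_ge_0_finite) simp
  then obtain a b where "a \<in> C" "b \<in> C" "a \<noteq> b" using card by (rule obtain_two_elements)
  then obtain w' where w': "w' \<in> C" "w' \<noteq> x0" by blast
  note edge = sigma_comp_sw_edges_inI[OF x0(2)]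
  have "\<exists>e\<in>sw_edges_in V \<theta> C. w \<in> e" if w: "w \<in> C" for w
  proof (cases "w = x0")
    case False
    from w x0 have "(sw_edge V \<theta>)\<^sup>*\<^sup>* x0 w" unfolding sigma_comp_def by simp
    then obtain u where "(sw_edge V \<theta>)\<^sup>*\<^sup>* x0 u" "sw_edge V \<theta> u w"
      using False by (cases rule: rtranclp.cases) simp_all
    moreover then have "u \<in> C" using x0 unfolding sigma_comp_def sw_edge_def by simp
    ultimately show ?thesis using edge by blast
  next
    case True
    from w' x0 have "(sw_edge V \<theta>)\<^sup>*\<^sup>* x0 w'" unfolding sigma_comp_def by simp
    then obtain u where "sw_edge V \<theta> x0 u"
      using w'(2) by (cases rule: converse_rtranclpE) simp_all
    then show ?thesis using edge[of x0 u] x0 True unfolding sigma_comp_def by auto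
  qed
  moreover have "e \<subseteq> C" if "e \<in> sw_edges_in V \<theta> C" for e
    using that by (rule sw_edges_inE) simp
  ultimately show ?thesis by blast
qed

lemma switchable_component_two_edges_meet:
  assumes C: "switchable_component V \<theta> C" and E: "sw_edges_in V \<theta> C = {f, g}"
  shows "f \<inter> g \<noteq> {}"
proof
  assume disjoint: "f \<inter> g = {}"
  obtain x0 where x0: "x0 \<in> V" "C = sigma_comp V \<theta> x0"
    using C unfolding switchable_component_def by blast
  have cover: "f \<union> g = C" using switchable_component_sw_edges_cover[OF C] E by simp
  have nonempty: "e \<noteq> {}" if "e \<in> {f, g}" for e
    using that E by (auto elim: sw_edges_inE)
  have contained: "C \<subseteq> h" if "x0 \<in> h" "h \<inter> k = {}" "{h, k} = {f, g}" for h k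
  proof
    fix w assume "w \<in> C"
    then have "(sw_edge V \<theta>)\<^sup>*\<^sup>* x0 w" using x0 unfolding sigma_comp_def by simp
    then show "w \<in> h"
    proof (rule rtranclp_closed_set)
      fix u w' assume "u \<in> h" "sw_edge V \<theta> u w'"
      moreover have "u \<in> C" using \<open>u \<in> h\<close> that(3) cover by blast
      ultimately have "{u, w'} \<in> {h, k}"
        using sigma_comp_sw_edges_inI[OF x0(2)] E that(3) by simp
      then show "w' \<in> h" using \<open>u \<in> h\<close> that(2) by blast
    qed (fact that(1))
  qed
  have "x0 \<in> f \<or> x0 \<in> g"
    using cover x0 unfolding sigma_comp_def by auto
  then show False
  proof
    assume "x0 \<in> f"
    then show False using contained[of f g] disjoint cover nonempty[of g] by blast
  next
    assume "x0 \<in> g"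
    then show False using contained[of g f] disjoint cover nonempty[of f] by blast
  qed
qed

lemma doubletons_sharing_vertex:
  assumes "a \<noteq> b" "c \<noteq> d" "{a, b} \<noteq> {c, d}" "{a, b} \<inter> {c, d} \<noteq> {}"
  obtains v x y where "v \<noteq> x" "v \<noteq> y" "x \<noteq> y" "{a, b} = {v, x}" "{c, d} = {v, y}"
proof -
  consider "a = c" | "a = d" | "b = c" | "b = d" using assms(4) by blast
  then show ?thesis
  proof cases
    case 1 then show ?thesis using assms by (intro that[of a b d]) auto
  next
    case 2 then show ?thesis using assms by (intro that[of a b c]) auto
  next
    case 3 then show ?thesis using assms by (intro that[of b a d]) auto
  next
    case 4 then show ?thesis using assms by (intro that[of b a c]) auto
  qed
qed

lemma switchable_component_shape:
  assumes C: "switchable_component V \<theta> C" and "card (sw_edges_in V \<theta> C) \<le> 2"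
  obtains (edge) x y where "x \<noteq> y" "C = {x, y}" "sw_edges_in V \<theta> C = {{x, y}}"
  | (path) v x y where "v \<noteq> x" "v \<noteq> y" "x \<noteq> y" "C = {v, x, y}"
      "sw_edges_in V \<theta> C = {{v, x}, {v, y}}"
proof -
  let ?E = "sw_edges_in V \<theta> C"
  have cover: "\<Union> ?E = C" using switchable_component_sw_edges_cover[OF C] .
  have "2 \<le> card C" using C unfolding switchable_component_def by blast
  then have "finite C" "C \<noteq> {}" using card_ge_0_finite[of C] by auto
  moreover have "?E \<subseteq> Pow C" by (auto elim: sw_edges_inE)
  ultimately have "finite ?E" "?E \<noteq> {}"
    using cover finite_subset[of ?E "Pow C"] by auto
  then have "card ?E = 1 \<or> card ?E = 2"
    using assms(2) card_gt_0_iff[of ?E] by linarith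
  moreover have pair: "\<exists>u w. e = {u, w} \<and> u \<noteq> w" if "e \<in> ?E" for e
    using that by (rule sw_edges_inE) (auto simp: sw_edge_def)
  ultimately show ?thesis
  proof (elim disjE)
    assume "card ?E = 1"
    then obtain e where E: "?E = {e}" by (rule card_1_singletonE)
    then obtain u w where uw: "e = {u, w}" "u \<noteq> w" using pair by blast
    then have "?E = {{u, w}}" using E by simp
    moreover then have "C = {u, w}" using cover by simp
    ultimately show ?thesis using uw(2) by (intro edge)
  next
    assume "card ?E = 2"
    then obtain e1 e2 where E: "?E = {e1, e2}" "e1 \<noteq> e2" by (auto simp: card_2_iff)
    obtain a b c d where ab: "e1 = {a, b}" "a \<noteq> b" and cd: "e2 = {c, d}" "c \<noteq> d"
      using pair[of e1] pair[of e2] E(1) by auto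
    have "{a, b} \<noteq> {c, d}" "{a, b} \<inter> {c, d} \<noteq> {}"
      using E(2) ab cd switchable_component_two_edges_meet[OF C E(1)] by simp_all
    then obtain v x y where vxy: "v \<noteq> x" "v \<noteq> y" "x \<noteq> y" and "{a, b} = {v, x}" "{c, d} = {v, y}"
      by (rule doubletons_sharing_vertex[OF ab(2) cd(2)])
    then have "?E = {{v, x}, {v, y}}" using E(1) ab(1) cd(1) by simp
    moreover then have "C = {v, x, y}" using cover by auto
    ultimately show ?thesis using path vxy by blast
  qed
qed

lemma switchable_pair_in_Dset:
  assumes "trigraph V \<theta>" "u \<in> V" "w \<in> V" "u \<noteq> w" "\<theta> u w = 0"
  shows "u \<in> Dset V \<theta>" "w \<in> Dset V \<theta>"
proof -
  let ?C = "sigma_comp V \<theta> u"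
  have "u \<in> ?C" "w \<in> ?C"
    using assms by (auto simp: sigma_comp_def sw_edge_def)
  moreover have "finite ?C"
    using trigraph_finite[OF assms(1)] unfolding sigma_comp_def by simp
  ultimately have "2 \<le> card ?C"
    using card_mono[of ?C "{u, w}"] assms(4) by simp
  then have "switchable_component V \<theta> ?C" unfolding switchable_component_def using assms(2) by blast
  then show "u \<in> Dset V \<theta>" "w \<in> Dset V \<theta>" using \<open>u \<in> ?C\<close> \<open>w \<in> ?C\<close> unfolding Dset_def by blast+
qed

lemma class_F_cases:
  assumes F: "class_F V \<theta>"
  obtains (none) "Dset V \<theta> = {}"
  | (small) x y where "x \<noteq> y" "Dset V \<theta> = {x, y}" "\<theta> x y = 0"
      "nbhd V \<theta> x \<inter> nbhd V \<theta> y = {}"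
  | (light) v x y where "v \<noteq> x" "v \<noteq> y" "x \<noteq> y" "Dset V \<theta> = {v, x, y}"
      "\<theta> v x = 0" "\<theta> v y = 0" "\<forall>w\<in>V - {v, x, y}. \<theta> v w = -1" "\<theta> x y = -1"
      "nbhd V \<theta> x \<inter> nbhd V \<theta> y = {v}"
proof (cases "Dset V \<theta> = {}")
  case False
  then obtain C where C: "switchable_component V \<theta> C" by (auto simp: Dset_def)
  note F_parts = F[unfolded class_F_def]
  note T = F_parts[THEN conjunct1]
  note uniq = F_parts[THEN conjunct2, THEN conjunct2, THEN conjunct1]
  note cond = F_parts[THEN conjunct2, THEN conjunct2, THEN conjunct2]
  have unique: "Dset V \<theta> = C"
    using uniq C unfolding Dset_def by blast
  note C_cond = cond[rule_format, OF C]
  note small_cond = C_cond[THEN conjunct2, THEN conjunct1, rule_format]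
  note light_cond = C_cond[THEN conjunct2, THEN conjunct2, rule_format]
  from C C_cond[THEN conjunct1] show ?thesis
  proof (cases rule: switchable_component_shape)
    case (edge x y)
    have "\<theta> x y = 0" using sw_edges_in_theta[OF T, of x y C] edge by simp
    with edge show ?thesis
      by (intro small[of x y]) (simp_all add: unique small_cond)
  next
    case (path v x y)
    have "\<theta> v x = 0" "\<theta> v y = 0"
      using sw_edges_in_theta[OF T, of v x C] sw_edges_in_theta[OF T, of v y C] path by simp_all
    moreover have "(\<forall>w\<in>V - {v, x, y}. \<theta> v w = -1) \<and> \<theta> x y = -1 \<and> nbhd V \<theta> x \<inter> nbhd V \<theta> y = {v}"
      using light_cond path(3,5) by blast
    ultimately show ?thesis using path
      by (intro light[of v x y]) (simp_all add: unique)
  qed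
qed (rule none)

lemma unfavorable_cases:
  assumes "\<not> favorable V \<theta>" "5 \<le> card V"
  obtains (no_strong_antiedge)
      "\<And>u w. u \<in> V - Dset V \<theta> \<Longrightarrow> w \<in> V - Dset V \<theta> \<Longrightarrow> u \<noteq> w \<Longrightarrow> \<theta> u w \<noteq> -1"
  | (small_cliques) x y where "x \<noteq> y" "Dset V \<theta> = {x, y}"
      "is_clique \<theta> (V - (Dset V \<theta> \<union> nbhd V \<theta> x))"
      "is_clique \<theta> (V - (Dset V \<theta> \<union> nbhd V \<theta> y))"
proof -
  have "\<not> (\<exists>u\<in>V - Dset V \<theta>. \<exists>w\<in>V - Dset V \<theta>. u \<noteq> w \<and> \<theta> u w = -1) \<or>
      (\<exists>x y. x \<noteq> y \<and> Dset V \<theta> = {x, y} \<and> is_clique \<theta> (V - (Dset V \<theta> \<union> nbhd V \<theta> x)) \<and>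
        is_clique \<theta> (V - (Dset V \<theta> \<union> nbhd V \<theta> y)))"
    using assms unfolding favorable_def by blast
  then show ?thesis using that by blast
qed

text \<open>The Berge and skew-partition hypotheses are deliberately left out: each configuration instead
  produces one of the obstructions explicitly.\<close>

locale small_config =
  fixes V :: "'a set" and \<theta> :: "'a \<Rightarrow> 'a \<Rightarrow> int" and x y :: 'a
  assumes trigraph: "trigraph V \<theta>" and card_V: "6 \<le> card V"
    and x_in: "x \<in> V" and y_in: "y \<in> V" and x_ne_y: "x \<noteq> y" and switchable_xy: "\<theta> x y = 0"
    and only_xy_switchable: "\<And>u w. u \<in> V \<Longrightarrow> w \<in> V \<Longrightarrow> u \<noteq> w \<Longrightarrow> \<theta> u w = 0 \<Longrightarrow> {u, w} = {x, y}"
    and disjoint_nbhds: "nbhd V \<theta> x \<inter> nbhd V \<theta> y = {}"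
    and clique_x: "is_clique \<theta> (V - ({x, y} \<union> nbhd V \<theta> x))"
    and clique_y: "is_clique \<theta> (V - ({x, y} \<union> nbhd V \<theta> y))"
begin

lemma swap: "small_config V \<theta> y x"
proof
  show "\<theta> y x = 0" using switchable_xy trigraph_sym[OF trigraph x_in y_in] by simp
  show "{u, w} = {y, x}" if "u \<in> V" "w \<in> V" "u \<noteq> w" "\<theta> u w = 0" for u w
    using only_xy_switchable[OF that] by (simp add: insert_commute)
  show "nbhd V \<theta> y \<inter> nbhd V \<theta> x = {}" using disjoint_nbhds by (simp add: Int_commute)
  show "is_clique \<theta> (V - ({y, x} \<union> nbhd V \<theta> y))" using clique_y by (simp add: insert_commute)
  show "is_clique \<theta> (V - ({y, x} \<union> nbhd V \<theta> x))" using clique_x by (simp add: insert_commute)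
qed (use trigraph card_V x_in y_in x_ne_y in auto)

lemmas theta_sym = trigraph_sym[OF trigraph]
lemmas finite_V = trigraph_finite[OF trigraph]

lemma not_nbhd_y_if_nbhd_x: "r \<in> nbhd V \<theta> x \<Longrightarrow> r \<notin> nbhd V \<theta> y"
  using disjoint_nbhds by auto

lemma theta_x:
  assumes "r \<in> V - {x, y}"
  shows "\<theta> x r = (if r \<in> nbhd V \<theta> x then 1 else -1)"
    and "\<theta> r x = (if r \<in> nbhd V \<theta> x then 1 else -1)"
proof -
  have r: "r \<in> V" "r \<noteq> x" "r \<noteq> y" using assms by auto
  have "\<theta> r x \<noteq> 0"
    using only_xy_switchable[of r x] r x_in by (auto simp: doubleton_eq_iff)
  moreover have "r \<in> nbhd V \<theta> x \<longleftrightarrow> \<theta> r x \<in> {0, 1}"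
    using r unfolding nbhd_def adj_def by auto
  ultimately show "\<theta> r x = (if r \<in> nbhd V \<theta> x then 1 else -1)"
    using trigraph_values[OF trigraph r(1) x_in r(2)] by auto
  then show "\<theta> x r = (if r \<in> nbhd V \<theta> x then 1 else -1)"
    using theta_sym[OF x_in r(1)] by simp
qed

lemma theta_y:
  assumes "r \<in> V - {x, y}"
  shows "\<theta> y r = (if r \<in> nbhd V \<theta> y then 1 else -1)"
    and "\<theta> r y = (if r \<in> nbhd V \<theta> y then 1 else -1)"
  using small_config.theta_x[OF swap, of r] assms by (auto simp: insert_commute)

lemma strong_outside_xy:
  assumes "u \<in> V - {x, y}" "w \<in> V - {x, y}" "u \<noteq> w"
  shows "\<theta> u w = 1 \<or> \<theta> u w = -1"
proof -
  have "\<theta> u w \<noteq> 0"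
    using only_xy_switchable[of u w] assms by (auto simp: doubleton_eq_iff)
  then show ?thesis using trigraph_values[OF trigraph, of u w] assms by auto
qed

lemma strongly_complete_off_nbhd_x:
  assumes "u \<in> V - {x, y}" "w \<in> V - {x, y}" "u \<noteq> w" "u \<notin> nbhd V \<theta> x" "w \<notin> nbhd V \<theta> x"
  shows "\<theta> u w = 1"
proof -
  have "adj \<theta> u w" using clique_x assms unfolding is_clique_def by auto
  then show ?thesis using strong_outside_xy[OF assms(1-3)] unfolding adj_def by auto
qed

lemma strongly_complete_off_nbhd_y:
  assumes "u \<in> V - {x, y}" "w \<in> V - {x, y}" "u \<noteq> w" "u \<notin> nbhd V \<theta> y" "w \<notin> nbhd V \<theta> y"
  shows "\<theta> u w = 1"
  using small_config.strongly_complete_off_nbhd_x[OF swap, of u w] assms by (simp add: insert_commute)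

lemma card_outside_xy: "4 \<le> card (V - {x, y})"
proof -
  have "card (V - {x, y}) = card V - 2"
    using finite_V x_in y_in x_ne_y by (simp add: card_Diff_subset)
  then show ?thesis using card_V by simp
qed

lemma hole_through_anticomplete_vertex:
  assumes z: "z \<in> V - {x, y}" "z \<notin> nbhd V \<theta> x" "z \<notin> nbhd V \<theta> y"
    and a: "a \<in> V - {x, y}" "a \<in> nbhd V \<theta> x" and b: "b \<in> V - {x, y}" "b \<in> nbhd V \<theta> y"
    and ab: "\<theta> a b = -1"
  shows "is_hole V \<theta> [z, a, x, y, b]"
proof -
  have a_y: "a \<notin> nbhd V \<theta> y" and b_x: "b \<notin> nbhd V \<theta> x"
    using not_nbhd_y_if_nbhd_x a b disjoint_nbhds by blast+
  have "distinct [z, a, x, y, b]" using z a b a_y b_x x_ne_y by auto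
  moreover have "set [z, a, x, y, b] \<subseteq> V" using z a b x_in y_in by auto
  moreover have "\<theta> z a = 1" using strongly_complete_off_nbhd_y[of z a] z a a_y by auto
  moreover have "\<theta> b z = 1" using strongly_complete_off_nbhd_x[of b z] z b b_x by auto
  moreover have "\<theta> a x = 1" "\<theta> z x = -1" "\<theta> x b = -1"
    using theta_x[of a] theta_x[of z] theta_x[of b] a z b b_x by simp_all
  moreover have "\<theta> y b = 1" "\<theta> z y = -1" "\<theta> a y = -1"
    using theta_y[of b] theta_y[of z] theta_y[of a] b z a a_y by simp_all
  ultimately show ?thesis
    using hole_5I[OF trigraph] switchable_xy ab unfolding adj_def antiadj_def by simp
qed

lemma anticomplete_vertex_balanced_skew_partition:
  assumes z: "z \<in> V - {x, y}" "z \<notin> nbhd V \<theta> x" "z \<notin> nbhd V \<theta> y"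
    and no_antiedge: "\<And>a b. a \<in> V - {x, y} \<Longrightarrow> a \<in> nbhd V \<theta> x \<Longrightarrow>
      b \<in> V - {x, y} \<Longrightarrow> b \<in> nbhd V \<theta> y \<Longrightarrow> \<theta> a b \<noteq> -1"
  shows "balanced_skew_partition V \<theta> {x, y, z} (V - {x, y, z})"
proof -
  have strong_clique: "\<theta> u w = 1" if "u \<in> V - {x, y}" "w \<in> V - {x, y}" "u \<noteq> w" for u w
  proof -
    consider "u \<notin> nbhd V \<theta> x" "w \<notin> nbhd V \<theta> x" | "u \<notin> nbhd V \<theta> y" "w \<notin> nbhd V \<theta> y"
      | "u \<in> nbhd V \<theta> x" "w \<in> nbhd V \<theta> y" | "u \<in> nbhd V \<theta> y" "w \<in> nbhd V \<theta> x"
      using not_nbhd_y_if_nbhd_x by blast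
    then show ?thesis
    proof cases
      case 3
      then show ?thesis using no_antiedge[of u w] strong_outside_xy that by blast
    next
      case 4
      then show ?thesis
        using no_antiedge[of w u] strong_outside_xy that theta_sym[of u w] by auto
    qed (use strongly_complete_off_nbhd_x strongly_complete_off_nbhd_y that in blast)+
  qed
  have "finite (V - {x, y})" using finite_V by simp
  moreover have "V - {x, y, z} = (V - {x, y}) - {z}" by auto
  ultimately have "finite (V - {x, y, z})" "2 \<le> card (V - {x, y, z})"
    using z card_outside_xy by simp_all
  then obtain b1 b2 where b: "b1 \<in> V - {x, y, z}" "b2 \<in> V - {x, y, z}" "b1 \<noteq> b2"
    by (rule obtain_two_elements)
  have complement: "V - (V - {x, y, z}) = {x, y, z}" using z x_in y_in by auto
  have "\<not> connected_set \<theta> {x, y, z}"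
  proof (rule not_connected_setI[of x _ z "{x, y}"])
    fix a c assume "a \<in> {x, y}" "c \<in> {x, y, z}" "c \<notin> {x, y}"
    then show "\<not> adj \<theta> a c"
      using theta_x(1)[of z] theta_y(1)[of z] z unfolding adj_def by auto
  qed (use z in auto)
  then show ?thesis
    using strong_clique_balanced_skew_partition[of "V - {x, y, z}" V \<theta> b1 b2] strong_clique b
    unfolding complement by auto
qed

lemma complete_to_nbhd_x_balanced_skew_partition:
  assumes w: "w \<in> V - {x, y}" "w \<in> nbhd V \<theta> y" and u: "u \<in> V - {x, y}" "u \<in> nbhd V \<theta> y" "u \<noteq> w"
    and complete: "\<forall>a\<in>V - {x, y}. a \<in> nbhd V \<theta> x \<longrightarrow> \<theta> w a = 1"
  shows "balanced_skew_partition V \<theta> {x, u} (V - {x, u})"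
proof -
  have u_x: "u \<notin> nbhd V \<theta> x" and w_x: "w \<notin> nbhd V \<theta> x"
    using not_nbhd_y_if_nbhd_x u w by blast+
  have "\<theta> w b = 1" if "b \<in> V - {x, u}" "b \<noteq> w" for b
  proof (cases "b = y")
    case True then show ?thesis using theta_y(2)[of w] w by simp
  next
    case False
    then have "b \<in> V - {x, y}" using that by auto
    then show ?thesis
      using complete strongly_complete_off_nbhd_x[of w b] w w_x that by (cases "b \<in> nbhd V \<theta> x") auto
  qed
  then have "\<not> anticonnected_set \<theta> (V - {x, u})"
    by (intro not_anticonnected_setI[of w _ y "{w}"]) (use w u x_ne_y y_in in \<open>auto simp: antiadj_def\<close>)
  moreover have "\<theta> x u = -1" using theta_x(1)[of u] u u_x by simp
  ultimately show ?thesis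
    using strong_antiedge_balanced_skew_partition[OF trigraph x_in] u by auto
qed

lemma anticomplete_to_nbhd_x_balanced_skew_partition:
  assumes u: "u \<in> V - {x, y}" "u \<in> nbhd V \<theta> y" and w: "w \<in> V - {x, y}" "w \<in> nbhd V \<theta> y" "u \<noteq> w"
    and anticomplete: "\<forall>a\<in>V - {x, y}. a \<in> nbhd V \<theta> x \<longrightarrow> \<theta> u a = -1"
    and covered: "V - {x, y} \<subseteq> nbhd V \<theta> x \<union> nbhd V \<theta> y"
  shows "\<exists>A B. balanced_skew_partition V \<theta> A B"
proof -
  have u_x: "u \<notin> nbhd V \<theta> x" using not_nbhd_y_if_nbhd_x u by blast
  define B where "B = {y} \<union> ((V - {x, y}) \<inter> nbhd V \<theta> y - {u})"
  have strong_clique: "\<theta> p q = 1" if "p \<in> B" "q \<in> B" "p \<noteq> q" for p q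
  proof -
    have "p = y \<or> p \<in> (V - {x, y}) \<inter> nbhd V \<theta> y" "q = y \<or> q \<in> (V - {x, y}) \<inter> nbhd V \<theta> y"
      using that unfolding B_def by auto
    then show ?thesis
    proof (elim disjE)
      assume "p = y" "q \<in> (V - {x, y}) \<inter> nbhd V \<theta> y"
      then show ?thesis using theta_y(1)[of q] by simp
    next
      assume "q = y" "p \<in> (V - {x, y}) \<inter> nbhd V \<theta> y"
      then show ?thesis using theta_y(2)[of p] by simp
    next
      assume "p \<in> (V - {x, y}) \<inter> nbhd V \<theta> y" "q \<in> (V - {x, y}) \<inter> nbhd V \<theta> y"
      then show ?thesis
        using strongly_complete_off_nbhd_x[of p q] not_nbhd_y_if_nbhd_x that(3) by blast
    qed (use that(3) in simp)
  qed
  have "B \<subseteq> V" "y \<in> B" "w \<in> B" "y \<noteq> w" using w y_in unfolding B_def by auto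
  moreover have "\<not> connected_set \<theta> (V - B)"
  proof (rule not_connected_setI[of u _ x "{u}"])
    fix a b assume ab: "a \<in> V - B" "b \<in> V - B" "a \<in> {u}" "b \<notin> {u}"
    have "\<theta> u b = -1"
    proof (cases "b = x")
      case True then show ?thesis using theta_x(2)[of u] u u_x by simp
    next
      case False
      then have "b \<in> V - {x, y}" "b \<in> nbhd V \<theta> x" using ab covered unfolding B_def by auto
      then show ?thesis using anticomplete by blast
    qed
    then show "\<not> adj \<theta> a b" using ab unfolding adj_def by auto
  qed (use u x_ne_y x_in in \<open>auto simp: B_def\<close>)
  ultimately have "balanced_skew_partition V \<theta> (V - B) B"
    using strong_clique_balanced_skew_partition[of B V \<theta> y w] strong_clique by blast
  then show ?thesis by blast
qed

lemma small_nbhd_x_balanced_skew_partition: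
  assumes covered: "V - {x, y} \<subseteq> nbhd V \<theta> x \<union> nbhd V \<theta> y"
    and small: "card ((V - {x, y}) \<inter> nbhd V \<theta> x) \<le> 1"
  shows "\<exists>A B. balanced_skew_partition V \<theta> A B"
proof -
  let ?X = "(V - {x, y}) \<inter> nbhd V \<theta> x" and ?Y = "(V - {x, y}) \<inter> nbhd V \<theta> y"
  have finite: "finite ?X" "finite ?Y" using finite_V by simp_all
  have "card (V - {x, y}) = card (?X \<union> ?Y)"
    by (rule arg_cong[where f = card]) (use covered in blast)
  also have "\<dots> \<le> card ?X + card ?Y" by (rule card_Un_le)
  finally have "2 \<le> card ?Y" using card_outside_xy small by linarith
  with finite(2) obtain u w where "u \<in> ?Y" "w \<in> ?Y" and uw: "u \<noteq> w"
    by (rule obtain_two_elements)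
  then have u: "u \<in> V - {x, y}" "u \<in> nbhd V \<theta> y" and w: "w \<in> V - {x, y}" "w \<in> nbhd V \<theta> y"
    by auto
  have "(\<forall>a\<in>V - {x, y}. a \<in> nbhd V \<theta> x \<longrightarrow> \<theta> u a = -1) \<or>
      (\<forall>a\<in>V - {x, y}. a \<in> nbhd V \<theta> x \<longrightarrow> \<theta> u a = 1)"
  proof (cases "?X = {}")
    case True
    then show ?thesis by blast
  next
    case False
    then have "card ?X \<noteq> 0" using finite(1) by simp
    then have "card ?X = 1" using small by linarith
    then obtain a where a: "?X = {a}" by (rule card_1_singletonE)
    then have a_in: "a \<in> V - {x, y}" "a \<in> nbhd V \<theta> x" by blast+
    then have "u \<noteq> a" using u(2) not_nbhd_y_if_nbhd_x by blast
    then have "\<theta> u a = 1 \<or> \<theta> u a = -1" using strong_outside_xy u(1) a_in(1) by blast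
    moreover have "a' = a" if "a' \<in> V - {x, y}" "a' \<in> nbhd V \<theta> x" for a'
      using that a by blast
    ultimately show ?thesis by blast
  qed
  then consider (anticomplete) "\<forall>a\<in>V - {x, y}. a \<in> nbhd V \<theta> x \<longrightarrow> \<theta> u a = -1"
    | (complete) "\<forall>a\<in>V - {x, y}. a \<in> nbhd V \<theta> x \<longrightarrow> \<theta> u a = 1"
    by blast
  then show ?thesis
  proof cases
    case anticomplete
    then show ?thesis by (rule anticomplete_to_nbhd_x_balanced_skew_partition[OF u w uw _ covered])
  next
    case complete
    then show ?thesis using complete_to_nbhd_x_balanced_skew_partition[OF u w uw[symmetric]] by blast
  qed
qed

lemma crossing_antihole:
  assumes a1: "a1 \<in> V - {x, y}" "a1 \<in> nbhd V \<theta> x" and a2: "a2 \<in> V - {x, y}" "a2 \<in> nbhd V \<theta> x"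
    and b1: "b1 \<in> V - {x, y}" "b1 \<in> nbhd V \<theta> y" and b2: "b2 \<in> V - {x, y}" "b2 \<in> nbhd V \<theta> y"
    and "\<theta> a1 b1 = -1" "\<theta> a2 b2 = -1" "\<theta> a1 b2 \<noteq> -1" "\<theta> a2 b1 \<noteq> -1"
  shows "is_antihole V \<theta> [x, b1, a1, y, a2, b2]"
proof -
  have b_x: "b1 \<notin> nbhd V \<theta> x" "b2 \<notin> nbhd V \<theta> x" and a_y: "a1 \<notin> nbhd V \<theta> y" "a2 \<notin> nbhd V \<theta> y"
    using a1 a2 b1 b2 not_nbhd_y_if_nbhd_x by blast+
  have "distinct [x, b1, a1, y, a2, b2]" using assms b_x a_y x_ne_y by auto
  moreover have "set [x, b1, a1, y, a2, b2] \<subseteq> V" using assms x_in y_in by auto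
  moreover have "\<theta> x b1 = -1" "\<theta> b2 x = -1" "\<theta> x a1 = 1" "\<theta> x a2 = 1"
    using theta_x[of b1] theta_x[of b2] theta_x[of a1] theta_x[of a2] assms b_x by auto
  moreover have "\<theta> a1 y = -1" "\<theta> y a2 = -1" "\<theta> b1 y = 1" "\<theta> y b2 = 1"
    using theta_y[of b1] theta_y[of b2] theta_y[of a1] theta_y[of a2] assms a_y by auto
  moreover have "\<theta> b1 a1 = -1" using theta_sym[of b1 a1] assms by auto
  moreover have "\<theta> b1 a2 = 1" using theta_sym[of b1 a2] strong_outside_xy[of a2 b1] assms b_x by auto
  moreover have "\<theta> a1 b2 = 1" using strong_outside_xy[of a1 b2] assms b_x by auto
  moreover have "\<theta> b1 b2 = 1" using strongly_complete_off_nbhd_x[of b1 b2] assms b_x \<open>distinct _\<close> by auto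
  moreover have "\<theta> a1 a2 = 1" using strongly_complete_off_nbhd_y[of a1 a2] assms a_y \<open>distinct _\<close> by auto
  ultimately show ?thesis
    using antihole_6I[OF trigraph] switchable_xy assms unfolding adj_def antiadj_def by simp
qed

lemma large_nbhds_obstruction:
  assumes covered: "V - {x, y} \<subseteq> nbhd V \<theta> x \<union> nbhd V \<theta> y"
    and large: "2 \<le> card ((V - {x, y}) \<inter> nbhd V \<theta> x)" "2 \<le> card ((V - {x, y}) \<inter> nbhd V \<theta> y)"
  shows "(\<exists>A B. balanced_skew_partition V \<theta> A B) \<or> (\<exists>hs. is_antihole V \<theta> hs \<and> length hs = 6)"
proof -
  let ?X = "(V - {x, y}) \<inter> nbhd V \<theta> x" and ?Y = "(V - {x, y}) \<inter> nbhd V \<theta> y"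
  have finite: "finite ?X" "finite ?Y" using finite_V by simp_all
  show ?thesis
  proof (cases "\<exists>b\<in>?Y. \<forall>a\<in>?X. \<theta> b a = 1")
    case True
    then obtain b where b: "b \<in> V - {x, y}" "b \<in> nbhd V \<theta> y" and complete: "\<forall>a\<in>?X. \<theta> b a = 1"
      by blast
    obtain u where u: "u \<in> ?Y" "u \<noteq> b"
      using obtain_two_elements[OF finite(2) large(2)] by metis
    then show ?thesis
      using complete_to_nbhd_x_balanced_skew_partition[OF b, of u] complete by blast
  next
    case no_complete: False
    show ?thesis
    proof (cases "\<exists>a\<in>?X. \<forall>b\<in>?Y. \<theta> a b = -1")
      case True
      then obtain a where a: "a \<in> V - {y, x}" "a \<in> nbhd V \<theta> x" and anti: "\<forall>b\<in>?Y. \<theta> a b = -1"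
        by blast
      obtain u where u: "u \<in> ?X" "u \<noteq> a"
        using obtain_two_elements[OF finite(1) large(1)] by metis
      have "V - {y, x} \<subseteq> nbhd V \<theta> y \<union> nbhd V \<theta> x" using covered by blast
      then show ?thesis
        using small_config.anticomplete_to_nbhd_x_balanced_skew_partition[OF swap a, of u] u anti
        by blast
    next
      case False
      have "\<forall>b\<in>?Y. \<exists>a\<in>?X. \<theta> a b = -1"
      proof
        fix b assume b: "b \<in> ?Y"
        then obtain a where a: "a \<in> ?X" "\<theta> b a \<noteq> 1" using no_complete by blast
        have "a \<noteq> b" using a b not_nbhd_y_if_nbhd_x by blast
        then have "\<theta> b a = -1" using strong_outside_xy[of b a] a b by blast
        then show "\<exists>a\<in>?X. \<theta> a b = -1" using theta_sym[of a b] a b by auto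
      qed
      moreover have "\<forall>a\<in>?X. \<exists>b\<in>?Y. \<theta> a b \<noteq> -1" using False by blast
      moreover have "?X \<noteq> {}" using large(1) by auto
      ultimately obtain a1 a2 b1 b2 where "a1 \<in> ?X" "a2 \<in> ?X" "b1 \<in> ?Y" "b2 \<in> ?Y"
        "\<theta> a1 b1 = -1" "\<theta> a2 b2 = -1" "\<theta> a1 b2 \<noteq> -1" "\<theta> a2 b1 \<noteq> -1"
        using crossing_pairs[OF finite(1), of ?Y "\<lambda>a b. \<theta> a b = -1"] by blast
      then have "is_antihole V \<theta> [x, b1, a1, y, a2, b2]" by (intro crossing_antihole) auto
      then show ?thesis by force
    qed
  qed
qed

lemma covered_obstruction:
  assumes covered: "V - {x, y} \<subseteq> nbhd V \<theta> x \<union> nbhd V \<theta> y"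
  shows "(\<exists>A B. balanced_skew_partition V \<theta> A B) \<or> (\<exists>hs. is_antihole V \<theta> hs \<and> length hs = 6)"
proof -
  consider "card ((V - {x, y}) \<inter> nbhd V \<theta> x) \<le> 1" | "card ((V - {x, y}) \<inter> nbhd V \<theta> y) \<le> 1"
    | "2 \<le> card ((V - {x, y}) \<inter> nbhd V \<theta> x)" "2 \<le> card ((V - {x, y}) \<inter> nbhd V \<theta> y)"
    by linarith
  then show ?thesis
  proof cases
    case 1
    then show ?thesis using small_nbhd_x_balanced_skew_partition covered by blast
  next
    case 2
    moreover have "V - {y, x} \<subseteq> nbhd V \<theta> y \<union> nbhd V \<theta> x" "{y, x} = {x, y}" using covered by blast+
    ultimately show ?thesis using small_config.small_nbhd_x_balanced_skew_partition[OF swap] by metis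
  next
    case 3
    then show ?thesis using large_nbhds_obstruction covered by blast
  qed
qed

lemma obstruction:
  "(\<exists>A B. balanced_skew_partition V \<theta> A B) \<or> \<not> berge V \<theta> \<or>
    (\<exists>hs. is_antihole V \<theta> hs \<and> length hs = 6)"
proof (cases "V - {x, y} \<subseteq> nbhd V \<theta> x \<union> nbhd V \<theta> y")
  case True
  then show ?thesis using covered_obstruction by blast
next
  case False
  then obtain z where z: "z \<in> V - {x, y}" "z \<notin> nbhd V \<theta> x" "z \<notin> nbhd V \<theta> y" by blast
  show ?thesis
  proof (cases "\<exists>a\<in>V - {x, y}. a \<in> nbhd V \<theta> x \<and> (\<exists>b\<in>V - {x, y}. b \<in> nbhd V \<theta> y \<and> \<theta> a b = -1)")
    case True
    then obtain a b where "a \<in> V - {x, y}" "a \<in> nbhd V \<theta> x" "b \<in> V - {x, y}" "b \<in> nbhd V \<theta> y"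
      "\<theta> a b = -1" by blast
    then have "is_hole V \<theta> [z, a, x, y, b]" by (rule hole_through_anticomplete_vertex[OF z])
    then show ?thesis using odd_hole_not_berge by fastforce
  next
    case False
    then show ?thesis using anticomplete_vertex_balanced_skew_partition[OF z] by blast
  qed
qed

end

locale light_config =
  fixes V :: "'a set" and \<theta> :: "'a \<Rightarrow> 'a \<Rightarrow> int" and v x y :: 'a
  assumes trigraph: "trigraph V \<theta>" and card_V: "6 \<le> card V"
    and v_in: "v \<in> V" and x_in: "x \<in> V" and y_in: "y \<in> V"
    and v_ne_x: "v \<noteq> x" and v_ne_y: "v \<noteq> y" and x_ne_y: "x \<noteq> y"
    and switchable_vx: "\<theta> v x = 0" and switchable_vy: "\<theta> v y = 0" and strong_antiedge_xy: "\<theta> x y = -1"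
    and v_anticomplete: "\<forall>w\<in>V - {v, x, y}. \<theta> v w = -1"
    and common_nbhd: "nbhd V \<theta> x \<inter> nbhd V \<theta> y = {v}"
    and only_vxy_switchable:
      "\<And>u w. u \<in> V \<Longrightarrow> w \<in> V \<Longrightarrow> u \<noteq> w \<Longrightarrow> \<theta> u w = 0 \<Longrightarrow> u \<in> {v, x, y} \<and> w \<in> {v, x, y}"
    and no_strong_antiedge:
      "\<And>u w. u \<in> V - {v, x, y} \<Longrightarrow> w \<in> V - {v, x, y} \<Longrightarrow> u \<noteq> w \<Longrightarrow> \<theta> u w \<noteq> -1"
begin

lemmas theta_sym = trigraph_sym[OF trigraph]
lemmas finite_V = trigraph_finite[OF trigraph]

lemma swap: "light_config V \<theta> v y x"
proof
  have vyx: "{v, y, x} = {v, x, y}" by auto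
  show "\<theta> y x = -1" using strong_antiedge_xy theta_sym[OF x_in y_in] by simp
  show "\<forall>w\<in>V - {v, y, x}. \<theta> v w = -1" using v_anticomplete unfolding vyx .
  show "nbhd V \<theta> y \<inter> nbhd V \<theta> x = {v}" using common_nbhd by (simp add: Int_commute)
  show "u \<in> {v, y, x} \<and> w \<in> {v, y, x}" if "u \<in> V" "w \<in> V" "u \<noteq> w" "\<theta> u w = 0" for u w
    using only_vxy_switchable[OF that] unfolding vyx .
  show "\<theta> u w \<noteq> -1" if "u \<in> V - {v, y, x}" "w \<in> V - {v, y, x}" "u \<noteq> w" for u w
    using no_strong_antiedge that unfolding vyx by blast
qed (use trigraph card_V v_in x_in y_in v_ne_x v_ne_y x_ne_y switchable_vx switchable_vy in auto)

lemma strong_clique_outside: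
  assumes "u \<in> V - {v, x, y}" "w \<in> V - {v, x, y}" "u \<noteq> w"
  shows "\<theta> u w = 1"
proof -
  have "\<theta> u w \<noteq> 0" using only_vxy_switchable[of u w] assms by auto
  then show ?thesis using no_strong_antiedge[OF assms] trigraph_values[OF trigraph, of u w] assms by auto
qed

lemma theta_x:
  assumes "r \<in> V - {v, x, y}"
  shows "\<theta> x r = (if r \<in> nbhd V \<theta> x then 1 else -1)"
    and "\<theta> r x = (if r \<in> nbhd V \<theta> x then 1 else -1)"
proof -
  have r: "r \<in> V" "r \<noteq> x" "r \<noteq> y" "r \<noteq> v" using assms by auto
  have "\<theta> r x \<noteq> 0" using only_vxy_switchable[of r x] r x_in by auto
  moreover have "r \<in> nbhd V \<theta> x \<longleftrightarrow> \<theta> r x \<in> {0, 1}"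
    using r unfolding nbhd_def adj_def by auto
  ultimately show "\<theta> r x = (if r \<in> nbhd V \<theta> x then 1 else -1)"
    using trigraph_values[OF trigraph r(1) x_in r(2)] by auto
  then show "\<theta> x r = (if r \<in> nbhd V \<theta> x then 1 else -1)"
    using theta_sym[OF x_in r(1)] by simp
qed

lemma theta_y:
  assumes "r \<in> V - {v, x, y}"
  shows "\<theta> y r = (if r \<in> nbhd V \<theta> y then 1 else -1)"
    and "\<theta> r y = (if r \<in> nbhd V \<theta> y then 1 else -1)"
proof -
  have "r \<in> V - {v, y, x}" using assms by auto
  then show "\<theta> y r = (if r \<in> nbhd V \<theta> y then 1 else -1)"
    and "\<theta> r y = (if r \<in> nbhd V \<theta> y then 1 else -1)"
    using light_config.theta_x[OF swap] by blast+
qed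

lemma card_outside_vxy: "3 \<le> card (V - {v, x, y})"
proof -
  have "card (V - {v, x, y}) = card V - card {v, x, y}"
    using v_in x_in y_in finite_V by (intro card_Diff_subset) auto
  moreover have "card {v, x, y} = 3" using v_ne_x v_ne_y x_ne_y by simp
  ultimately show ?thesis using card_V by simp
qed

lemma anticomplete_vertex_balanced_skew_partition:
  assumes z: "z \<in> V - {v, x, y}" "z \<notin> nbhd V \<theta> x" "z \<notin> nbhd V \<theta> y"
  shows "balanced_skew_partition V \<theta> {v, x, y, z} (V - {v, x, y, z})"
proof -
  have "finite (V - {v, x, y})" using finite_V by simp
  moreover have "V - {v, x, y, z} = (V - {v, x, y}) - {z}" by auto
  ultimately have "finite (V - {v, x, y, z})" "2 \<le> card (V - {v, x, y, z})"
    using z card_outside_vxy by simp_all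
  then obtain b1 b2 where b: "b1 \<in> V - {v, x, y, z}" "b2 \<in> V - {v, x, y, z}" "b1 \<noteq> b2"
    by (rule obtain_two_elements)
  have complement: "V - (V - {v, x, y, z}) = {v, x, y, z}" using z v_in x_in y_in by auto
  have "\<not> connected_set \<theta> {v, x, y, z}"
  proof (rule not_connected_setI[of v _ z "{v, x, y}"])
    fix a c assume "a \<in> {v, x, y}" "c \<in> {v, x, y, z}" "c \<notin> {v, x, y}"
    then show "\<not> adj \<theta> a c"
      using v_anticomplete theta_x(1)[of z] theta_y(1)[of z] z unfolding adj_def by auto
  qed (use z in auto)
  then show ?thesis
    using strong_clique_balanced_skew_partition[of "V - {v, x, y, z}" V \<theta> b1 b2]
      strong_clique_outside b unfolding complement by auto
qed

lemma empty_nbhd_x_balanced_skew_partition: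
  assumes no_x: "(V - {v, x, y}) \<inter> nbhd V \<theta> x = {}" and all_y: "V - {v, x, y} \<subseteq> nbhd V \<theta> y"
  shows "\<exists>A B. balanced_skew_partition V \<theta> A B"
proof -
  let ?R = "V - {v, x, y}"
  have "finite ?R" "2 \<le> card ?R" using finite_V card_outside_vxy by simp_all
  then obtain y1 w where yw: "y1 \<in> ?R" "w \<in> ?R" "y1 \<noteq> w" by (rule obtain_two_elements)
  define B where "B = {y} \<union> (?R - {y1})"
  have strong_clique: "\<theta> p q = 1" if "p \<in> B" "q \<in> B" "p \<noteq> q" for p q
  proof -
    have "p = y \<or> p \<in> ?R" "q = y \<or> q \<in> ?R" using that unfolding B_def by auto
    then show ?thesis
    proof (elim disjE)
      assume "p = y" "q \<in> ?R" then show ?thesis using theta_y(1)[of q] all_y by auto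
    next
      assume "q = y" "p \<in> ?R" then show ?thesis using theta_y(2)[of p] all_y by auto
    next
      assume "p \<in> ?R" "q \<in> ?R" then show ?thesis using strong_clique_outside that(3) by blast
    qed (use that(3) in simp)
  qed
  have complement: "V - B = {v, x, y1}" unfolding B_def using yw v_in x_in v_ne_y x_ne_y by auto
  have "B \<subseteq> V" "y \<in> B" "w \<in> B" "y \<noteq> w" using yw y_in unfolding B_def by auto
  moreover have "\<not> connected_set \<theta> (V - B)" unfolding complement
  proof (rule not_connected_setI[of v _ y1 "{v, x}"])
    fix a c assume "a \<in> {v, x}" "c \<in> {v, x, y1}" "c \<notin> {v, x}"
    moreover have "y1 \<notin> nbhd V \<theta> x" using no_x yw by blast
    ultimately show "\<not> adj \<theta> a c"
      using v_anticomplete theta_x(1)[of y1] yw unfolding adj_def by auto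
  qed (use yw in auto)
  ultimately have "balanced_skew_partition V \<theta> (V - B) B"
    using strong_clique_balanced_skew_partition[of B V \<theta> y w] strong_clique by blast
  then show ?thesis by blast
qed

lemma hole_through_v:
  assumes a: "a \<in> V - {v, x, y}" "a \<in> nbhd V \<theta> x" and b: "b \<in> V - {v, x, y}" "b \<in> nbhd V \<theta> y"
  shows "is_hole V \<theta> [y, v, x, a, b]"
proof -
  have a_y: "a \<notin> nbhd V \<theta> y" and b_x: "b \<notin> nbhd V \<theta> x" using common_nbhd a b by auto
  have "distinct [y, v, x, a, b]" using a b a_y b_x v_ne_x v_ne_y x_ne_y by auto
  moreover have "set [y, v, x, a, b] \<subseteq> V" using a b v_in x_in y_in by auto
  moreover have "\<theta> y v = 0" using switchable_vy theta_sym[OF v_in y_in] by simp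
  moreover have "\<theta> x a = 1" "\<theta> x b = -1" using theta_x(1)[of a] theta_x(1)[of b] a b b_x by simp_all
  moreover have "\<theta> b y = 1" "\<theta> y a = -1" using theta_y(2)[of b] theta_y(1)[of a] a b a_y by simp_all
  moreover have "\<theta> a b = 1" using strong_clique_outside[of a b] a b \<open>distinct _\<close> by auto
  moreover have "\<theta> y x = -1" using strong_antiedge_xy theta_sym[OF x_in y_in] by simp
  moreover have "\<theta> v a = -1" "\<theta> v b = -1" using v_anticomplete a b by auto
  ultimately show ?thesis
    using hole_5I[OF trigraph] switchable_vx unfolding adj_def antiadj_def by simp
qed

lemma obstruction: "(\<exists>A B. balanced_skew_partition V \<theta> A B) \<or> \<not> berge V \<theta>"
proof -
  let ?R = "V - {v, x, y}"
  consider (anticomplete) z where "z \<in> ?R" "z \<notin> nbhd V \<theta> x" "z \<notin> nbhd V \<theta> y"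
    | (no_x) "?R \<inter> nbhd V \<theta> x = {}" "?R \<subseteq> nbhd V \<theta> y"
    | (no_y) "?R \<inter> nbhd V \<theta> y = {}" "?R \<subseteq> nbhd V \<theta> x"
    | (both) a b where "a \<in> ?R" "a \<in> nbhd V \<theta> x" "b \<in> ?R" "b \<in> nbhd V \<theta> y"
    by blast
  then show ?thesis
  proof cases
    case (anticomplete z)
    then show ?thesis using anticomplete_vertex_balanced_skew_partition by blast
  next
    case no_x
    then show ?thesis using empty_nbhd_x_balanced_skew_partition by blast
  next
    case no_y
    have "{v, y, x} = {v, x, y}" by auto
    then show ?thesis
      using light_config.empty_nbhd_x_balanced_skew_partition[OF swap] no_y by simp
  next
    case (both a b)
    then have "is_hole V \<theta> [y, v, x, a, b]" by (rule hole_through_v)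
    then show ?thesis using odd_hole_not_berge by fastforce
  qed
qed

end

lemma Dset_subset: "Dset V \<theta> \<subseteq> V"
  unfolding Dset_def switchable_component_def sigma_comp_def by auto

lemma unfavorable_no_switchable_clique:
  assumes T: "trigraph V \<theta>" and "\<not> favorable V \<theta>" "5 \<le> card V" and D: "Dset V \<theta> = {}"
  shows "is_clique \<theta> V"
  using assms(2,3)
proof (cases rule: unfavorable_cases)
  case no_strong_antiedge
  then show ?thesis using is_cliqueI_no_strong_antiedge[OF T, of V] D by simp
next
  case (small_cliques x y)
  then show ?thesis using D by simp
qed

lemma small_configI:
  assumes F: "class_F V \<theta>" and unfavorable: "\<not> favorable V \<theta>" and card: "6 \<le> card V"
    and xy: "x \<noteq> y" and D: "Dset V \<theta> = {x, y}" and switchable: "\<theta> x y = 0"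
    and disjoint: "nbhd V \<theta> x \<inter> nbhd V \<theta> y = {}"
  shows "small_config V \<theta> x y"
proof -
  have T: "trigraph V \<theta>" using F unfolding class_F_def by (rule conjunct1)
  have card5: "5 \<le> card V" using card by simp
  have in_V: "x \<in> V" "y \<in> V" using Dset_subset[of V \<theta>] D by auto
  have only: "{u, w} = {x, y}" if "u \<in> V" "w \<in> V" "u \<noteq> w" "\<theta> u w = 0" for u w
    using switchable_pair_in_Dset[OF T that] D \<open>u \<noteq> w\<close> by auto
  have cliques: "is_clique \<theta> (V - ({x, y} \<union> nbhd V \<theta> x)) \<and> is_clique \<theta> (V - ({x, y} \<union> nbhd V \<theta> y))"
    using unfavorable card5
  proof (cases rule: unfavorable_cases)
    case no_strong_antiedge
    have "is_clique \<theta> (V - ({x, y} \<union> nbhd V \<theta> z))" for z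
      by (rule is_cliqueI_no_strong_antiedge[OF T]) (use no_strong_antiedge D in auto)
    then show ?thesis by blast
  next
    case (small_cliques x' y')
    then have "(x' = x \<and> y' = y) \<or> (x' = y \<and> y' = x)" using D by (auto simp: doubleton_eq_iff)
    then show ?thesis using small_cliques D by auto
  qed
  show ?thesis
    by unfold_locales (fact T card in_V xy switchable only disjoint cliques[THEN conjunct1]
      cliques[THEN conjunct2])+
qed

lemma light_configI:
  assumes F: "class_F V \<theta>" and unfavorable: "\<not> favorable V \<theta>" and card: "6 \<le> card V"
    and vxy: "v \<noteq> x" "v \<noteq> y" "x \<noteq> y" and D: "Dset V \<theta> = {v, x, y}"
    and switchable: "\<theta> v x = 0" "\<theta> v y = 0" and light: "\<forall>w\<in>V - {v, x, y}. \<theta> v w = -1"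
      "\<theta> x y = -1" "nbhd V \<theta> x \<inter> nbhd V \<theta> y = {v}"
  shows "light_config V \<theta> v x y"
proof -
  have T: "trigraph V \<theta>" using F unfolding class_F_def by (rule conjunct1)
  have card5: "5 \<le> card V" using card by simp
  have in_V: "v \<in> V" "x \<in> V" "y \<in> V" using Dset_subset[of V \<theta>] D by auto
  have no_strong_antiedge: "\<theta> u w \<noteq> -1"
    if "u \<in> V - {v, x, y}" "w \<in> V - {v, x, y}" "u \<noteq> w" for u w
    using unfavorable card5
  proof (cases rule: unfavorable_cases)
    case no_strong_antiedge
    then show ?thesis using that D by simp
  next
    case (small_cliques x' y')
    then have "card {v, x, y} = 2" using D by simp
    then show ?thesis using vxy by simp
  qed
  have only: "u \<in> {v, x, y} \<and> w \<in> {v, x, y}"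
    if "u \<in> V" "w \<in> V" "u \<noteq> w" "\<theta> u w = 0" for u w
    using switchable_pair_in_Dset[OF T that] D by simp
  show ?thesis
    by unfold_locales (fact T card in_V vxy switchable light only no_strong_antiedge)+
qed

theorem theorem3p3:
  fixes V :: "'a set" and \<theta> :: "'a \<Rightarrow> 'a \<Rightarrow> int"
  assumes "class_F V \<theta>"
    and "\<not> (\<exists>A B. balanced_skew_partition V \<theta> A B)"
    and "\<not> (\<exists>hs. is_antihole V \<theta> hs \<and> length hs = 6)"
    and "\<not> favorable V \<theta>"
  shows "complete_trigraph V \<theta> \<or> card V \<le> 5"
proof (rule ccontr)
  assume "\<not> (complete_trigraph V \<theta> \<or> card V \<le> 5)"
  then have not_clique: "\<not> is_clique \<theta> V" and card: "6 \<le> card V"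
    unfolding complete_trigraph_def by auto
  have T: "trigraph V \<theta>" and berge: "berge V \<theta>"
    using assms(1) unfolding class_F_def by (blast dest: conjunct1 conjunct2)+
  from assms(1) show False
  proof (cases rule: class_F_cases)
    case none
    then show False using unfavorable_no_switchable_clique[OF T assms(4)] card not_clique by simp
  next
    case (small x y)
    then have "small_config V \<theta> x y" using small_configI[OF assms(1,4) card] by blast
    then show False using small_config.obstruction[of V \<theta> x y] assms(2,3) berge by blast
  next
    case (light v x y)
    then have "light_config V \<theta> v x y" using light_configI[OF assms(1,4) card] by blast
    then show False using light_config.obstruction[of V \<theta> v x y] assms(2) berge by blast
  qed
qed

end
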